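(* Let $A\in\mathcal{M}_n$. The following are equivalent: (1) $M(A)$ is $\mathbb{Z}/2$-trivial, i.e. $H^*(M(A);\mathbb{Z}/2)\cong H^*((\mathbb{C}P^1)^n;\mathbb{Z}/2)$ as graded rings; (2) $\alpha^A_j\equiv0\pmod 2$ in $H^2(M(A);\mathbb{Z})$ for $j=1,\dots,n$; (3) every entry of $A$ is an even integer.
   Context: Let $\mathcal{M}_n$ be the set of integral strictly upper triangular $n\times n$ matrices $A=(A^i_j)$ ($A^i_j$ is the $(i,j)$ entry, and $A^i_j=0$ for $i\ge j$). For $A\in\mathcal{M}_n$, $M(A)$ denotes the Bott manifold obtained as the quotient of $(S^3)^n$ ($S^3\subset\mathbb{C}^2$ the unit sphere) by the free $(S^1)^n$-action $(g_1,\dots,g_n)\cdot((z_1,w_1),\dots,(z_n,w_n))=\big(((\prod_{k<j}g_k^{-A^k_j})g_jz_j,\ g_jw_j)\big)_{j=1}^n$. Let $x^A_j\in H^2(M(A);\mathbb{Z})$ be the first Chern class of the line bundle obtained as the quotient of $(S^3)^n\times\mathbb{C}$ where $g$ acts on the $\mathbb{C}$-factor by $g_j^{-1}$. Put $\alpha^A_j=\sum_{i<j}A^i_jx^A_i$. Then $H^*(M(A);\mathbb{Z})=\mathbb{Z}[x^A_1,\dots,x^A_n]/((x^A_j)^2-\alpha^A_jx^A_j\mid j=1,\dots,n)$, with $x^A_1,\dots,x^A_n$ a basis of $H^2(M(A);\mathbb{Z})$. *)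

theory Defs
  imports "HOL-Algebra.QuotRing" "HOL-Library.Poly_Mapping" "HOL-Library.Z2"
begin

text \<open>Polynomials in the variables x_1, ..., x_n with coefficients in a commutative ring:
  a polynomial is a finitely supported map from monomials (finitely supported exponent
  vectors nat \<Rightarrow>0 nat) to coefficients. The variable x_j is indexed by j, 1 \<le> j \<le> n.\<close>

type_synonym 'a mpoly = "(nat \<Rightarrow>\<^sub>0 nat) \<Rightarrow>\<^sub>0 'a"

definition poly_ring :: "nat \<Rightarrow> ('a::comm_ring_1) mpoly ring" where
  "poly_ring n = \<lparr>carrier = {p :: 'a mpoly. \<forall>m \<in> Poly_Mapping.keys p. Poly_Mapping.keys m \<subseteq> {1..n}},
                  mult = (*), one = 1, zero = 0, add = (+)\<rparr>"

definition var :: "nat \<Rightarrow> ('a::comm_ring_1) mpoly" where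
  "var j = Poly_Mapping.single (Poly_Mapping.single j 1) 1"

text \<open>Integral strictly upper triangular n x n matrices; A i j is the (i,j) entry, 1 \<le> i,j \<le> n.\<close>
definition strict_upper :: "nat \<Rightarrow> (nat \<Rightarrow> nat \<Rightarrow> int) \<Rightarrow> bool" where
  "strict_upper n A \<longleftrightarrow> (\<forall>i\<in>{1..n}. \<forall>j\<in>{1..n}. j \<le> i \<longrightarrow> A i j = 0)"

definition alpha :: "(nat \<Rightarrow> nat \<Rightarrow> int) \<Rightarrow> nat \<Rightarrow> ('a::comm_ring_1) mpoly" where
  "alpha A j = (\<Sum>i\<in>{1..<j}. Poly_Mapping.single 0 (of_int (A i j)) * var i)"

definition rel_ideal :: "nat \<Rightarrow> (nat \<Rightarrow> nat \<Rightarrow> int) \<Rightarrow> ('a::comm_ring_1) mpoly set" where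
  "rel_ideal n A = genideal (poly_ring n) {var j ^ 2 - alpha A j * var j | j. j \<in> {1..n}}"

text \<open>The cohomology ring of the Bott manifold M(A) with coefficients in 'a:
  'a[x_1,...,x_n] / (x_j^2 - alpha_j x_j).\<close>
definition coh :: "nat \<Rightarrow> (nat \<Rightarrow> nat \<Rightarrow> int) \<Rightarrow> ('a::comm_ring_1) mpoly set ring" where
  "coh n A = poly_ring n Quot rel_ideal n A"

text \<open>A polynomial is homogeneous of cohomological degree d (each x_j has degree 2).\<close>
definition homog :: "nat \<Rightarrow> ('a::comm_ring_1) mpoly \<Rightarrow> bool" where
  "homog d p \<longleftrightarrow> (\<forall>m \<in> Poly_Mapping.keys p. 2 * (\<Sum>i\<in>Poly_Mapping.keys m. Poly_Mapping.lookup m i) = d)"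

definition cls :: "nat \<Rightarrow> (nat \<Rightarrow> nat \<Rightarrow> int) \<Rightarrow> ('a::comm_ring_1) mpoly \<Rightarrow> 'a mpoly set" where
  "cls n A p = rel_ideal n A +>\<^bsub>poly_ring n\<^esub> p"

definition cohdeg :: "nat \<Rightarrow> (nat \<Rightarrow> nat \<Rightarrow> int) \<Rightarrow> nat \<Rightarrow> ('a::comm_ring_1) mpoly set set" where
  "cohdeg n A d = cls n A ` {p \<in> carrier (poly_ring n). homog d p}"

definition graded_ring_iso_coh ::
  "nat \<Rightarrow> (nat \<Rightarrow> nat \<Rightarrow> int) \<Rightarrow> (nat \<Rightarrow> nat \<Rightarrow> int) \<Rightarrow> (('a::comm_ring_1) mpoly set \<Rightarrow> 'a mpoly set) \<Rightarrow> bool" where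
  "graded_ring_iso_coh n A B \<phi> \<longleftrightarrow>
     \<phi> \<in> ring_iso (coh n A) (coh n B) \<and> (\<forall>d. \<phi> ` cohdeg n A d = cohdeg n B d)"

text \<open>M(A) is Z/2-trivial: H^*(M(A);Z/2) \<cong> H^*((CP^1)^n;Z/2) = H^*(M(0);Z/2) as graded rings.
  Z/2 is the type bit.\<close>
definition Z2_trivial :: "nat \<Rightarrow> (nat \<Rightarrow> nat \<Rightarrow> int) \<Rightarrow> bool" where
  "Z2_trivial n A \<longleftrightarrow>
     (\<exists>\<phi> :: bit mpoly set \<Rightarrow> bit mpoly set. graded_ring_iso_coh n A (\<lambda>_ _. 0) \<phi>)"

end

theory Submission
  imports Defs
begin

text \<open>Everything is read off from the linear and quadratic coefficients in the presentation
  Z[x_1, ..., x_n] / (x_j^2 - alpha_j x_j). The relations are quadratic forms, so the ideal they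
  generate has no linear part, and for i < j the functional p \<mapsto> p[x_i x_j] + A^i_j p[x_j^2]
  vanishes on every relation and hence on the whole ideal. The first fact shows that alpha_j is
  twice a class in H^2 exactly when all A^i_j are even. With Z/2 coefficients squaring is
  additive, so all squares of classes in H^2((CP^1)^n) vanish; a graded isomorphism therefore
  forces x_j^2 = 0 in H^*(M(A); Z/2), and the functional turns this into A^i_j = 0 mod 2.
  Conversely, if all entries are even, the two presentations over Z/2 coincide.\<close>

lemma in_carrier_poly_ring:
  "p \<in> carrier (poly_ring n) \<longleftrightarrow> (\<forall>m \<in> Poly_Mapping.keys p. Poly_Mapping.keys m \<subseteq> {1..n})"
  by (simp add: poly_ring_def)

lemma poly_ring_simps [simp]:
  "mult (poly_ring n) = (*)" "one (poly_ring n) = 1" "zero (poly_ring n) = 0" "add (poly_ring n) = (+)"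
  by (simp_all add: poly_ring_def)

lemma poly_ring_add_closed:
  "p \<in> carrier (poly_ring n) \<Longrightarrow> q \<in> carrier (poly_ring n) \<Longrightarrow> p + q \<in> carrier (poly_ring n)"
  using keys_add[of p q] by (auto simp: in_carrier_poly_ring)

lemma keys_add_monomials:
  "Poly_Mapping.keys ((a :: nat \<Rightarrow>\<^sub>0 nat) + b) = Poly_Mapping.keys a \<union> Poly_Mapping.keys b"
  by (auto simp: in_keys_iff lookup_add)

lemma poly_ring_mult_closed:
  "p \<in> carrier (poly_ring n) \<Longrightarrow> q \<in> carrier (poly_ring n) \<Longrightarrow> p * q \<in> carrier (poly_ring n)"
  using keys_mult[of p q] by (fastforce simp: in_carrier_poly_ring keys_add_monomials)

lemma poly_ring_uminus_closed:
  "p \<in> carrier (poly_ring n) \<Longrightarrow> - p \<in> carrier (poly_ring n)"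
  by (simp add: in_carrier_poly_ring in_keys_iff)

lemma poly_ring_zero_one_closed [simp]:
  "0 \<in> carrier (poly_ring n)" "1 \<in> carrier (poly_ring n)"
  by (simp_all add: in_carrier_poly_ring)

lemma cring_poly_ring: "cring (poly_ring n :: ('a::comm_ring_1) mpoly ring)"
proof (rule cringI)
  show "abelian_group (poly_ring n :: 'a mpoly ring)"
    by (rule abelian_groupI)
      (auto simp: poly_ring_add_closed add_ac intro!: bexI[of _ "- _"] poly_ring_uminus_closed)
  show "comm_monoid (poly_ring n :: 'a mpoly ring)"
    by (rule comm_monoidI) (auto simp: poly_ring_mult_closed mult_ac)
qed (auto simp: distrib_right)

lemma ring_poly_ring: "ring (poly_ring n :: ('a::comm_ring_1) mpoly ring)"
  using cring.axioms(1)[OF cring_poly_ring] .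

lemma a_inv_poly_ring:
  assumes "x \<in> carrier (poly_ring n)"
  shows "a_inv (poly_ring n) x = - (x :: ('a::comm_ring_1) mpoly)"
proof -
  interpret cring "poly_ring n :: 'a mpoly ring" by (rule cring_poly_ring)
  show ?thesis
    by (rule minus_equality) (use assms in \<open>auto simp: poly_ring_uminus_closed\<close>)
qed

lemma poly_ring_sum_closed:
  assumes "additive_subgroup I (poly_ring n :: ('a::comm_ring_1) mpoly ring)"
    and "\<And>i. i \<in> S \<Longrightarrow> f i \<in> I"
  shows "(\<Sum>i\<in>S. f i) \<in> I"
  using assms(2)
proof (induction S rule: infinite_finite_induct)
  case (insert i S)
  then show ?case
    using additive_subgroup.a_closed[OF assms(1), of "f i" "sum f S"] by simp
qed (use additive_subgroup.zero_closed[OF assms(1)] in simp_all)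

lemma sum_power2_char_2:
  fixes f :: "'b \<Rightarrow> 'a::comm_ring_1"
  assumes "(2::'a) = 0"
  shows "(\<Sum>i\<in>S. f i)\<^sup>2 = (\<Sum>i\<in>S. (f i)\<^sup>2)"
proof (induction S rule: infinite_finite_induct)
  case (insert i S)
  have "(f i + sum f S)\<^sup>2 = (f i)\<^sup>2 + (sum f S)\<^sup>2 + 2 * f i * sum f S"
    by (simp add: power2_sum)
  then show ?case
    using insert assms by simp
qed simp_all

lemma poly_mapping_sum_single_keys:
  "p = (\<Sum>m\<in>Poly_Mapping.keys p. Poly_Mapping.single m (Poly_Mapping.lookup p m))"
  by (rule poly_mapping_eqI) (simp add: lookup_sum lookup_single when_def in_keys_iff)

section \<open>Coefficient functionals on homogeneous ideals\<close>

definition total_degree :: "(nat \<Rightarrow>\<^sub>0 nat) \<Rightarrow> nat" where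
  "total_degree m = (\<Sum>i\<in>Poly_Mapping.keys m. Poly_Mapping.lookup m i)"

lemma total_degree_add: "total_degree (a + b) = total_degree a + total_degree b"
  unfolding total_degree_def by (rule setsum_keys_plus_distrib) auto

lemma total_degree_single [simp]: "total_degree (Poly_Mapping.single i k) = k"
  by (simp add: total_degree_def)

lemma lookup_le_total_degree: "Poly_Mapping.lookup m i \<le> total_degree m"
  by (cases "i \<in> Poly_Mapping.keys m")
    (auto simp: total_degree_def in_keys_iff intro: member_le_sum)

lemma total_degree_pos: "a \<noteq> 0 \<Longrightarrow> total_degree a > 0"
  by (metis lookup_le_total_degree not_gr_zero poly_mapping_eqI lookup_zero le_zero_eq)

lemma total_degree_eq_1D:
  assumes "total_degree m = 1"
  shows "\<exists>k. m = Poly_Mapping.single k 1"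
proof -
  obtain k where k: "k \<in> Poly_Mapping.keys m"
    using assms by (force simp: total_degree_def)
  have "Poly_Mapping.lookup m x = 0" if "x \<noteq> k" for x
  proof (rule ccontr)
    assume "Poly_Mapping.lookup m x \<noteq> 0"
    then have "(\<Sum>i\<in>{k, x}. Poly_Mapping.lookup m i) \<le> total_degree m"
      unfolding total_degree_def by (intro sum_mono2) (use k in \<open>auto simp: in_keys_iff\<close>)
    with k that \<open>Poly_Mapping.lookup m x \<noteq> 0\<close> assms show False
      by (simp add: in_keys_iff)
  qed
  moreover have "Poly_Mapping.lookup m k = 1"
    using k lookup_le_total_degree[of m k] assms by (simp add: in_keys_iff)
  ultimately have "m = Poly_Mapping.single k 1"
    by (intro poly_mapping_eqI) (auto simp: lookup_single when_def)
  then show ?thesis ..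
qed

lemma homog_2_iff: "homog 2 p \<longleftrightarrow> (\<forall>m \<in> Poly_Mapping.keys p. total_degree m = 1)"
  by (auto simp: homog_def total_degree_def)

definition coeff_functional ::
  "(nat \<Rightarrow>\<^sub>0 nat) set \<Rightarrow> ((nat \<Rightarrow>\<^sub>0 nat) \<Rightarrow> 'a) \<Rightarrow> ('a::comm_ring_1) mpoly \<Rightarrow> 'a" where
  "coeff_functional M w p = (\<Sum>m\<in>M. w m * Poly_Mapping.lookup p m)"

lemma coeff_functional_add:
  "coeff_functional M w (p + q) = coeff_functional M w p + coeff_functional M w q"
  by (simp add: coeff_functional_def lookup_add distrib_left sum.distrib)

lemma coeff_functional_uminus: "coeff_functional M w (- p) = - coeff_functional M w p"
  by (simp add: coeff_functional_def sum_negf)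

lemma lookup_single_0_mult:
  "Poly_Mapping.lookup (Poly_Mapping.single 0 c * p) m = c * Poly_Mapping.lookup p m"
  by (simp flip: mult_map_scale_conv_mult add: map.rep_eq when_def)

lemma coeff_functional_scalar:
  "coeff_functional M w (Poly_Mapping.single 0 c * p) = c * coeff_functional M w p"
  unfolding coeff_functional_def lookup_single_0_mult sum_distrib_left
  by (simp add: mult.left_commute)

text \<open>Only the constant term of r contributes to the coefficients of r * g in degrees \<le> d.\<close>
lemma coeff_functional_mult_homogeneous:
  assumes M: "\<forall>m\<in>M. total_degree m \<le> d"
    and g: "\<forall>m\<in>Poly_Mapping.keys g. total_degree m = d"
    and "coeff_functional M w g = 0"
  shows "coeff_functional M w (r * g) = 0"
proof -
  define c where "c = Poly_Mapping.lookup r 0"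
  define r' where "r' = r - Poly_Mapping.single 0 c"
  have "Poly_Mapping.lookup (r' * g) m = 0" if "m \<in> M" for m
  proof (rule ccontr)
    assume "Poly_Mapping.lookup (r' * g) m \<noteq> 0"
    then obtain a b where ab: "m = a + b" "a \<in> Poly_Mapping.keys r'" "b \<in> Poly_Mapping.keys g"
      using keys_mult[of r' g] by (auto simp: in_keys_iff)
    have "a \<noteq> 0" using ab(2) by (auto simp: r'_def c_def in_keys_iff lookup_minus)
    then have "total_degree m > d"
      using ab g total_degree_pos[of a] by (simp add: total_degree_add)
    with M that show False by auto
  qed
  then have "coeff_functional M w (r' * g) = 0"
    by (simp add: coeff_functional_def)
  moreover have "r = Poly_Mapping.single 0 c + r'"
    by (simp add: r'_def)
  ultimately show ?thesis
    using assms(3) by (simp add: distrib_right coeff_functional_add coeff_functional_scalar)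
qed

lemma coeff_functional_genideal:
  fixes S :: "('a::comm_ring_1) mpoly set"
  assumes S: "S \<subseteq> carrier (poly_ring n)"
    and M: "\<forall>m\<in>M. total_degree m \<le> d"
    and homogeneous: "\<forall>s\<in>S. \<forall>m\<in>Poly_Mapping.keys s. total_degree m = d"
    and vanish: "\<forall>s\<in>S. coeff_functional M w s = 0"
    and p: "p \<in> genideal (poly_ring n) S"
  shows "coeff_functional M w p = 0"
proof -
  interpret cring "poly_ring n :: 'a mpoly ring" by (rule cring_poly_ring)
  define K where
    "K = {p \<in> carrier (poly_ring n). \<forall>r\<in>carrier (poly_ring n). coeff_functional M w (r * p) = 0}"
  have "ideal K (poly_ring n)"
  proof (rule idealI)
    show "subgroup K (add_monoid (poly_ring n))"
    proof (rule add.subgroupI)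
      show "K \<subseteq> carrier (poly_ring n)" "K \<noteq> {}"
        by (auto simp: K_def coeff_functional_def intro!: exI[of _ 0])
      show "\<ominus>\<^bsub>poly_ring n\<^esub> a \<in> K" if "a \<in> K" for a
        using that by (auto simp: K_def a_inv_poly_ring poly_ring_uminus_closed coeff_functional_uminus)
      show "a \<oplus>\<^bsub>poly_ring n\<^esub> b \<in> K" if "a \<in> K" "b \<in> K" for a b
        using that by (auto simp: K_def poly_ring_add_closed coeff_functional_add distrib_left)
    qed
    have "x * a \<in> K" if "a \<in> K" "x \<in> carrier (poly_ring n)" for a x
      using that by (auto simp: K_def poly_ring_mult_closed mult.assoc[symmetric])
    then show "x \<otimes>\<^bsub>poly_ring n\<^esub> a \<in> K" "a \<otimes>\<^bsub>poly_ring n\<^esub> x \<in> K"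
      if "a \<in> K" "x \<in> carrier (poly_ring n)" for a x
      using that by (simp_all add: mult.commute)
  qed (rule ring_axioms)
  moreover have "S \<subseteq> K"
    using S M homogeneous vanish by (auto simp: K_def intro!: coeff_functional_mult_homogeneous)
  ultimately have "p \<in> K"
    using genideal_minimal p by blast
  then show ?thesis
    by (auto simp: K_def dest: bspec[of _ _ 1])
qed

section \<open>The relations of the Bott manifold\<close>

abbreviation mon :: "nat \<Rightarrow> (nat \<Rightarrow>\<^sub>0 nat)" where
  "mon i \<equiv> Poly_Mapping.single i 1"

lemma single_eq_single_iff [simp]:
  "Poly_Mapping.single l v = Poly_Mapping.single i v \<longleftrightarrow> l = i \<or> v = 0"
  by (metis lookup_single_eq lookup_single_not_eq single_zero)

lemma mon_square: "mon k + mon k = Poly_Mapping.single k 2"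
  by (metis one_add_one single_add)

lemma mon_add_eq_iff:
  assumes "l < k" "i < j"
  shows "mon l + mon k = mon i + mon j \<longleftrightarrow> l = i \<and> k = j"
proof
  assume eq: "mon l + mon k = mon i + mon j"
  have "Poly_Mapping.lookup (mon l + mon k) x = Poly_Mapping.lookup (mon i + mon j) x" for x
    using eq by simp
  from this[of l] this[of k] assms show "l = i \<and> k = j"
    by (auto simp: lookup_add lookup_single when_def split: if_splits)
qed auto

lemma mon_add_neq_square:
  assumes "l \<noteq> k"
  shows "mon l + mon k \<noteq> Poly_Mapping.single j 2"
proof
  assume eq: "mon l + mon k = Poly_Mapping.single j 2"
  have "Poly_Mapping.lookup (mon l + mon k) x = Poly_Mapping.lookup (Poly_Mapping.single j (2::nat)) x" for x
    using eq by simp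
  from this[of l] this[of k] assms show False
    by (auto simp: lookup_add lookup_single when_def split: if_splits)
qed

lemma var_in_carrier: "j \<in> {1..n} \<Longrightarrow> var j \<in> carrier (poly_ring n)"
  by (simp add: var_def in_carrier_poly_ring)

lemma var_power2: "var j ^ 2 = Poly_Mapping.single (Poly_Mapping.single j 2) (1::'a::comm_ring_1)"
  unfolding var_def power2_eq_square mult_single mon_square by simp

lemma alpha_eq_sum_single:
  "alpha A j = (\<Sum>i\<in>{1..<j}. Poly_Mapping.single (mon i) (of_int (A i j)))"
  by (simp add: alpha_def var_def mult_single del: single_of_int)

lemma alpha_mult_var:
  "alpha A j * var j = (\<Sum>i\<in>{1..<j}. Poly_Mapping.single (mon i + mon j) (of_int (A i j) :: 'a::comm_ring_1))"
  by (simp add: alpha_eq_sum_single var_def sum_distrib_right mult_single)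

lemma alpha_zero [simp]: "alpha (\<lambda>_ _. 0) j = 0"
  by (simp add: alpha_eq_sum_single)

lemma keys_alpha: "Poly_Mapping.keys (alpha A j) \<subseteq> mon ` {1..<j}"
  unfolding alpha_eq_sum_single using keys_sum by (fastforce split: if_splits)

lemma alpha_in_carrier: "j \<le> n \<Longrightarrow> alpha A j \<in> carrier (poly_ring n)"
  using keys_alpha[of A j] by (fastforce simp: in_carrier_poly_ring)

lemma lookup_alpha:
  assumes "1 \<le> i" "i < j"
  shows "Poly_Mapping.lookup (alpha A j) (mon i) = of_int (A i j)"
  unfolding alpha_eq_sum_single lookup_sum using assms
  by (simp add: lookup_single when_def)

definition bott_relation :: "(nat \<Rightarrow> nat \<Rightarrow> int) \<Rightarrow> nat \<Rightarrow> ('a::comm_ring_1) mpoly" where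
  "bott_relation A j = var j ^ 2 - alpha A j * var j"

lemma keys_bott_relation:
  "Poly_Mapping.keys (bott_relation A j) \<subseteq>
     insert (Poly_Mapping.single j 2) ((\<lambda>i. mon i + mon j) ` {1..<j})"
proof -
  have "Poly_Mapping.keys (alpha A j * var j) \<subseteq> (\<lambda>i. mon i + mon j) ` {1..<j}"
    unfolding alpha_mult_var using keys_sum by (fastforce split: if_splits)
  moreover have "Poly_Mapping.keys (- p) = Poly_Mapping.keys p" for p :: "'a mpoly"
    by (auto simp: in_keys_iff)
  ultimately show ?thesis
    using keys_add[of "var j ^ 2" "- (alpha A j * var j)"]
    by (auto simp: bott_relation_def var_power2)
qed

lemma bott_relation_homogeneous:
  "\<forall>m\<in>Poly_Mapping.keys (bott_relation A j). total_degree m = 2"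
  using keys_bott_relation by (fastforce simp: total_degree_add)

lemma bott_relation_in_carrier: "j \<in> {1..n} \<Longrightarrow> bott_relation A j \<in> carrier (poly_ring n)"
  unfolding bott_relation_def diff_conv_add_uminus power2_eq_square
  by (intro poly_ring_add_closed poly_ring_uminus_closed poly_ring_mult_closed
      var_in_carrier alpha_in_carrier) auto

lemma lookup_bott_relation_square:
  "Poly_Mapping.lookup (bott_relation A k) (Poly_Mapping.single j 2) = (if k = j then 1 else 0)"
proof -
  have "Poly_Mapping.lookup (alpha A k * var k) (Poly_Mapping.single j 2) = 0"
    unfolding alpha_mult_var lookup_sum
    by (rule sum.neutral) (use mon_add_neq_square in \<open>auto simp: lookup_single when_def\<close>)
  then show ?thesis
    by (simp add: bott_relation_def lookup_minus var_power2 lookup_single when_def)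
qed

lemma lookup_bott_relation_mixed:
  assumes "1 \<le> i" "i < j"
  shows "Poly_Mapping.lookup (bott_relation A k) (mon i + mon j) = (if k = j then - of_int (A i j) else 0)"
proof -
  have "Poly_Mapping.lookup (alpha A k * var k) (mon i + mon j) =
        (\<Sum>l\<in>{1..<k}. if l = i \<and> k = j then of_int (A i j) else 0)"
    unfolding alpha_mult_var lookup_sum
    by (rule sum.cong) (use assms mon_add_eq_iff in \<open>auto simp: lookup_single\<close>)
  also have "\<dots> = (if k = j then of_int (A i j) else 0)"
    using assms by auto
  finally show ?thesis
    using mon_add_neq_square[of i j k] assms
    by (auto simp: bott_relation_def var_power2 lookup_minus lookup_single)
qed

lemma rel_ideal_eq_genideal: "rel_ideal n A = genideal (poly_ring n) (bott_relation A ` {1..n})"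
  unfolding rel_ideal_def bott_relation_def by (rule arg_cong[where f = "genideal _"]) auto

lemma bott_relations_in_carrier: "bott_relation A ` {1..n} \<subseteq> carrier (poly_ring n)"
  using bott_relation_in_carrier by blast

lemma ideal_rel_ideal: "ideal (rel_ideal n A) (poly_ring n :: ('a::comm_ring_1) mpoly ring)"
  unfolding rel_ideal_eq_genideal
  by (rule ring.genideal_ideal[OF ring_poly_ring bott_relations_in_carrier])

lemma bott_relation_in_rel_ideal: "k \<in> {1..n} \<Longrightarrow> bott_relation A k \<in> rel_ideal n A"
  unfolding rel_ideal_eq_genideal
  using ring.genideal_self[OF ring_poly_ring bott_relations_in_carrier] by blast

lemma rel_ideal_lookup_mon:
  assumes "p \<in> rel_ideal n A"
  shows "Poly_Mapping.lookup p (mon i) = 0"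
proof -
  have "coeff_functional {mon i} (\<lambda>_. 1) p = 0"
  proof (rule coeff_functional_genideal[OF bott_relations_in_carrier, where d = 2])
    have "mon i \<notin> Poly_Mapping.keys (bott_relation A k)" for k
      using bott_relation_homogeneous[of A k] by force
    then show "\<forall>s\<in>bott_relation A ` {1..n}. coeff_functional {mon i} (\<lambda>_. 1) s = 0"
      by (auto simp: coeff_functional_def in_keys_iff)
  qed (use assms bott_relation_homogeneous in \<open>auto simp: rel_ideal_eq_genideal\<close>)
  then show ?thesis
    by (simp add: coeff_functional_def)
qed

text \<open>The monomials x_i x_j and x_j^2 occur only in the relation of x_j, with coefficients
  -A^i_j and 1.\<close>
lemma rel_ideal_lookup_mixed:
  assumes "p \<in> rel_ideal n A" "1 \<le> i" "i < j"
  shows "Poly_Mapping.lookup p (mon i + mon j)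
           + of_int (A i j) * Poly_Mapping.lookup p (Poly_Mapping.single j 2) = 0"
proof -
  define w :: "(nat \<Rightarrow>\<^sub>0 nat) \<Rightarrow> 'a" where
    "w = (\<lambda>m. if m = Poly_Mapping.single j 2 then of_int (A i j) else 1)"
  have functional: "coeff_functional {mon i + mon j, Poly_Mapping.single j 2} w q =
      Poly_Mapping.lookup q (mon i + mon j) + of_int (A i j) * Poly_Mapping.lookup q (Poly_Mapping.single j 2)"
    for q
    using mon_add_neq_square[of i j j] assms by (simp add: coeff_functional_def w_def)
  have "coeff_functional {mon i + mon j, Poly_Mapping.single j 2} w p = 0"
  proof (rule coeff_functional_genideal[OF bott_relations_in_carrier, where d = 2])
    have "coeff_functional {mon i + mon j, Poly_Mapping.single j 2} w (bott_relation A k) = 0" for k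
      unfolding functional lookup_bott_relation_mixed[OF assms(2,3)] lookup_bott_relation_square
      by simp
    then show "\<forall>s\<in>bott_relation A ` {1..n}. coeff_functional {mon i + mon j, Poly_Mapping.single j 2} w s = 0"
      by blast
  qed (use assms bott_relation_homogeneous in \<open>auto simp: rel_ideal_eq_genideal total_degree_add\<close>)
  then show ?thesis
    unfolding functional .
qed

section \<open>The cohomology ring\<close>

lemma ring_coh: "ring (coh n A :: ('a::comm_ring_1) mpoly set ring)"
  unfolding coh_def by (rule ideal.quotient_is_ring[OF ideal_rel_ideal])

lemma cls_in_carrier: "p \<in> carrier (poly_ring n) \<Longrightarrow> cls n A p \<in> carrier (coh n A)"
  by (auto simp: coh_def cls_def FactRing_def A_RCOSETS_defs a_r_coset_def)

context
  fixes n :: nat and p q :: "'a::comm_ring_1 mpoly"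
  assumes p: "p \<in> carrier (poly_ring n)" and q: "q \<in> carrier (poly_ring n)"
begin

lemma cls_add: "cls n A p \<oplus>\<^bsub>coh n A\<^esub> cls n A q = cls n A (p + q)"
  using ideal.a_rcos_sum[OF ideal_rel_ideal p q] by (simp add: coh_def cls_def FactRing_def)

lemma cls_mult: "cls n A p \<otimes>\<^bsub>coh n A\<^esub> cls n A q = cls n A (p * q)"
  using ideal.rcoset_mult_add[OF ideal_rel_ideal p q] by (simp add: coh_def cls_def FactRing_def)

lemma cls_eq_iff: "cls n A p = cls n A q \<longleftrightarrow> p - q \<in> rel_ideal n A"
  using ring.quotient_eq_iff_same_a_r_cos[OF ring_poly_ring ideal_rel_ideal p q]
  by (simp add: cls_def a_minus_def a_inv_poly_ring[OF q])

end

lemma cls_eq_zero_iff: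
  fixes p :: "'a::comm_ring_1 mpoly"
  assumes "p \<in> carrier (poly_ring n)"
  shows "cls n A p = \<zero>\<^bsub>coh n A\<^esub> \<longleftrightarrow> p \<in> rel_ideal n A"
  using ideal.rcos_const_imp_mem[OF ideal_rel_ideal[of n A] assms]
    ring.a_rcos_zero[OF ring_poly_ring ideal_rel_ideal[of n A]]
  by (auto simp: coh_def cls_def FactRing_def)

text \<open>With Z/2 coefficients squaring is additive, so p^2 is a sum of multiples of the x_k^2.\<close>
lemma homog_2_square_in_rel_ideal_0:
  fixes p :: "bit mpoly"
  assumes p: "p \<in> carrier (poly_ring n)" and "homog 2 p"
  shows "p\<^sup>2 \<in> rel_ideal n (\<lambda>_ _. 0)"
proof -
  have "(2 :: bit mpoly) = 0"
    by (metis bit_2_eq_0 single_numeral single_zero)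
  then have square: "p\<^sup>2 = (\<Sum>m\<in>Poly_Mapping.keys p. (Poly_Mapping.single m (Poly_Mapping.lookup p m))\<^sup>2)"
    by (subst poly_mapping_sum_single_keys) (rule sum_power2_char_2)
  have "(Poly_Mapping.single m (Poly_Mapping.lookup p m))\<^sup>2 \<in> rel_ideal n (\<lambda>_ _. 0)"
    if m: "m \<in> Poly_Mapping.keys p" for m
  proof -
    obtain k where k: "m = mon k"
      using total_degree_eq_1D m \<open>homog 2 p\<close> unfolding homog_2_iff by blast
    then have "k \<in> {1..n}"
      using p m by (auto simp: in_carrier_poly_ring)
    moreover have "Poly_Mapping.single 0 ((Poly_Mapping.lookup p m)\<^sup>2) \<in> carrier (poly_ring n)"
      by (simp add: in_carrier_poly_ring)
    ultimately have "Poly_Mapping.single 0 ((Poly_Mapping.lookup p m)\<^sup>2) * bott_relation (\<lambda>_ _. 0) k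
        \<in> rel_ideal n (\<lambda>_ _. 0)"
      using ideal.I_l_closed[OF ideal_rel_ideal bott_relation_in_rel_ideal] unfolding poly_ring_simps
      by blast
    moreover have "(Poly_Mapping.single m (Poly_Mapping.lookup p m))\<^sup>2
        = Poly_Mapping.single 0 ((Poly_Mapping.lookup p m)\<^sup>2) * bott_relation (\<lambda>_ _. 0) k"
      unfolding bott_relation_def alpha_zero mult_zero_left diff_zero var_power2
      unfolding k power2_eq_square mult_single mon_square by simp
    ultimately show ?thesis
      by (simp only:)
  qed
  then show ?thesis
    unfolding square by (rule poly_ring_sum_closed[OF ideal.axioms(1)[OF ideal_rel_ideal]])
qed

lemma even_if_alpha_double:
  assumes "j \<le> n" and y: "y \<in> cohdeg n A 2"
    and double: "cls n A (alpha A j :: int mpoly) = y \<oplus>\<^bsub>coh n A\<^esub> y"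
    and "1 \<le> i" "i < j"
  shows "even (A i j)"
proof -
  obtain p :: "int mpoly" where p: "p \<in> carrier (poly_ring n)" "y = cls n A p"
    using y by (auto simp: cohdeg_def)
  then have "cls n A (alpha A j) = cls n A (p + p)"
    using double cls_add[OF p(1) p(1)] by simp
  then have "alpha A j - (p + p) \<in> rel_ideal n A"
    using cls_eq_iff alpha_in_carrier[OF \<open>j \<le> n\<close>] poly_ring_add_closed[OF p(1) p(1)] by blast
  then have "Poly_Mapping.lookup (alpha A j - (p + p)) (mon i) = 0"
    by (rule rel_ideal_lookup_mon)
  then have "Poly_Mapping.lookup (alpha A j) (mon i)
      - (Poly_Mapping.lookup p (mon i) + Poly_Mapping.lookup p (mon i)) = 0"
    by (simp only: lookup_minus lookup_add)
  then have "A i j = 2 * Poly_Mapping.lookup p (mon i)"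
    using lookup_alpha[OF \<open>1 \<le> i\<close> \<open>i < j\<close>, of A, where 'a = int] by simp
  then show ?thesis
    by simp
qed

lemma alpha_double_if_even:
  assumes "j \<le> n" and even: "\<forall>i\<in>{1..<j}. even (A i j)"
  shows "\<exists>y\<in>cohdeg n A 2. cls n A (alpha A j :: 'a::comm_ring_1 mpoly) = y \<oplus>\<^bsub>coh n A\<^esub> y"
proof -
  define p :: "'a mpoly" where "p = (\<Sum>i\<in>{1..<j}. Poly_Mapping.single (mon i) (of_int (A i j div 2)))"
  have "Poly_Mapping.keys p \<subseteq> mon ` {1..<j}"
    unfolding p_def using keys_sum by (fastforce split: if_splits)
  then have p: "p \<in> carrier (poly_ring n)" "homog 2 p"
    using \<open>j \<le> n\<close> by (fastforce simp: in_carrier_poly_ring homog_2_iff)+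
  have "alpha A j = p + p"
    unfolding alpha_eq_sum_single p_def sum.distrib[symmetric]
  proof (rule sum.cong)
    fix i assume "i \<in> {1..<j}"
    then have "A i j = A i j div 2 + A i j div 2"
      using even by auto
    then show "Poly_Mapping.single (mon i) (of_int (A i j)) =
        Poly_Mapping.single (mon i) (of_int (A i j div 2)) + Poly_Mapping.single (mon i) (of_int (A i j div 2))"
      by (metis of_int_add single_add)
  qed simp
  then have "cls n A (alpha A j) = cls n A p \<oplus>\<^bsub>coh n A\<^esub> cls n A p"
    using cls_add[OF p(1) p(1)] by simp
  moreover have "cls n A p \<in> cohdeg n A 2"
    using p by (auto simp: cohdeg_def)
  ultimately show ?thesis
    by blast
qed

lemma cohdeg_2_square_eq_zero:
  assumes "y \<in> (cohdeg n (\<lambda>_ _. 0) 2 :: bit mpoly set set)"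
  shows "y \<otimes>\<^bsub>coh n (\<lambda>_ _. 0)\<^esub> y = \<zero>\<^bsub>coh n (\<lambda>_ _. 0)\<^esub>"
proof -
  obtain p :: "bit mpoly" where p: "p \<in> carrier (poly_ring n)" "homog 2 p" "y = cls n (\<lambda>_ _. 0) p"
    using assms by (auto simp: cohdeg_def)
  then show ?thesis
    using homog_2_square_in_rel_ideal_0[OF p(1,2)] cls_mult[OF p(1) p(1)]
      cls_eq_zero_iff[OF poly_ring_mult_closed[OF p(1) p(1)]]
    by (simp add: power2_eq_square)
qed

lemma ring_iso_reflects_zero:
  assumes iso: "\<phi> \<in> ring_iso R S" and "ring R" "ring S"
    and "x \<in> carrier R" "\<phi> x = \<zero>\<^bsub>S\<^esub>"
  shows "x = \<zero>\<^bsub>R\<^esub>"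
proof -
  have "\<phi> \<zero>\<^bsub>R\<^esub> = \<zero>\<^bsub>S\<^esub>"
    using ring_hom_zero iso assms(2,3) by (auto simp: ring_iso_def)
  moreover have "inj_on \<phi> (carrier R)"
    using iso by (auto simp: ring_iso_def bij_betw_def)
  ultimately show ?thesis
    using assms(2,4,5) by (metis inj_onD ring.ring_simprules(2))
qed

lemma of_int_bit_eq_0_iff: "(of_int k :: bit) = 0 \<longleftrightarrow> even k"
  by (cases "even k") (auto elim!: evenE oddE)

lemma even_if_var_square_in_rel_ideal:
  assumes "(var j)\<^sup>2 \<in> (rel_ideal n A :: bit mpoly set)" and "1 \<le> i" "i < j"
  shows "even (A i j)"
proof -
  have "mon i + mon j \<noteq> Poly_Mapping.single j 2"
    using mon_add_neq_square \<open>i < j\<close> by simp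
  then have "(of_int (A i j) :: bit) = 0"
    using rel_ideal_lookup_mixed[OF assms] by (simp add: var_power2 lookup_single)
  then show ?thesis
    by (simp add: of_int_bit_eq_0_iff)
qed

text \<open>The isomorphism maps x_j^2 to the square of a class in H^2((CP^1)^n; Z/2), which is zero.\<close>
lemma even_if_Z2_trivial:
  assumes "Z2_trivial n A" and "1 \<le> i" "i < j" "j \<le> n"
  shows "even (A i j)"
proof -
  obtain \<phi> :: "bit mpoly set \<Rightarrow> bit mpoly set"
    where iso: "\<phi> \<in> ring_iso (coh n A) (coh n (\<lambda>_ _. 0))"
      and graded: "\<phi> ` cohdeg n A 2 = cohdeg n (\<lambda>_ _. 0) 2"
    using assms(1) unfolding Z2_trivial_def graded_ring_iso_coh_def by blast
  then have hom: "\<phi> \<in> ring_hom (coh n A) (coh n (\<lambda>_ _. 0))"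
    by (simp add: ring_iso_def)
  have v: "(var j :: bit mpoly) \<in> carrier (poly_ring n)"
    using assms by (intro var_in_carrier) simp
  define x where "x = cls n A (var j :: bit mpoly)"
  have x: "x \<in> carrier (coh n A)"
    unfolding x_def by (rule cls_in_carrier[OF v])
  have "x \<in> cohdeg n A 2"
    using v by (auto simp: x_def cohdeg_def homog_def var_def)
  then have "\<phi> x \<otimes>\<^bsub>coh n (\<lambda>_ _. 0)\<^esub> \<phi> x = \<zero>\<^bsub>coh n (\<lambda>_ _. 0)\<^esub>"
    using graded cohdeg_2_square_eq_zero by blast
  then have "\<phi> (x \<otimes>\<^bsub>coh n A\<^esub> x) = \<zero>\<^bsub>coh n (\<lambda>_ _. 0)\<^esub>"
    using ring_hom_mult[OF hom x x] by simp
  then have "x \<otimes>\<^bsub>coh n A\<^esub> x = \<zero>\<^bsub>coh n A\<^esub>"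
    by (rule ring_iso_reflects_zero[OF iso ring_coh ring_coh monoid.m_closed[OF ring.is_monoid[OF ring_coh] x x]])
  then have "(var j)\<^sup>2 \<in> (rel_ideal n A :: bit mpoly set)"
    using cls_mult[OF v v] cls_eq_zero_iff[OF poly_ring_mult_closed[OF v v]]
    by (simp add: x_def power2_eq_square)
  then show ?thesis
    using even_if_var_square_in_rel_ideal assms by blast
qed

lemma Z2_trivial_if_even:
  assumes "\<forall>j\<in>{1..n}. \<forall>i\<in>{1..<j}. even (A i j)"
  shows "Z2_trivial n A"
proof -
  have "(alpha A j :: bit mpoly) = 0" if "j \<in> {1..n}" for j
    unfolding alpha_eq_sum_single
  proof (rule sum.neutral, intro ballI)
    fix i assume "i \<in> {1..<j}"
    then have "(of_int (A i j) :: bit) = 0"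
      using assms that by (simp add: of_int_bit_eq_0_iff)
    then show "Poly_Mapping.single (mon i) (of_int (A i j) :: bit) = 0"
      by simp
  qed
  then have "(bott_relation A ` {1..n} :: bit mpoly set) = bott_relation (\<lambda>_ _. 0) ` {1..n}"
    by (intro image_cong) (simp_all add: bott_relation_def)
  then have ideal_eq: "(rel_ideal n A :: bit mpoly set) = rel_ideal n (\<lambda>_ _. 0)"
    by (simp only: rel_ideal_eq_genideal)
  have "graded_ring_iso_coh n A (\<lambda>_ _. 0) (id :: bit mpoly set \<Rightarrow> bit mpoly set)"
    unfolding graded_ring_iso_coh_def coh_def cohdeg_def cls_def ideal_eq
    by (simp add: ring_iso_set_refl)
  then show ?thesis
    unfolding Z2_trivial_def by blast
qed

theorem lemma6p4:
  fixes n :: nat and A :: "nat \<Rightarrow> nat \<Rightarrow> int"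
  assumes "strict_upper n A"
  shows "(Z2_trivial n A
           \<longleftrightarrow> (\<forall>j\<in>{1..n}. \<exists>y \<in> cohdeg n A 2.
                 cls n A (alpha A j :: int mpoly) = y \<oplus>\<^bsub>coh n A\<^esub> y))
       \<and> ((\<forall>j\<in>{1..n}. \<exists>y \<in> cohdeg n A 2.
                 cls n A (alpha A j :: int mpoly) = y \<oplus>\<^bsub>coh n A\<^esub> y)
           \<longleftrightarrow> (\<forall>i\<in>{1..n}. \<forall>j\<in>{1..n}. even (A i j)))"
proof -
  let ?even_above_diagonal = "\<forall>j\<in>{1..n}. \<forall>i\<in>{1..<j}. even (A i j)"
  have "even (A i j)" if "?even_above_diagonal" "i \<in> {1..n}" "j \<in> {1..n}" for i j
    using that assms by (cases "j \<le> i") (auto simp: strict_upper_def)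
  then have "(\<forall>i\<in>{1..n}. \<forall>j\<in>{1..n}. even (A i j)) \<longleftrightarrow> ?even_above_diagonal"
    by auto
  moreover have "Z2_trivial n A \<longleftrightarrow> ?even_above_diagonal"
    using even_if_Z2_trivial Z2_trivial_if_even by auto
  moreover have "(\<forall>j\<in>{1..n}. \<exists>y \<in> cohdeg n A 2.
      cls n A (alpha A j :: int mpoly) = y \<oplus>\<^bsub>coh n A\<^esub> y) \<longleftrightarrow> ?even_above_diagonal"
    using even_if_alpha_double alpha_double_if_even[where 'a = int] by auto
  ultimately show ?thesis
    by blast
qed

end
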